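(* Consider the multi-arm multi-stage platform design described in the context, with arbitrary pre-specified adding stages $s(1),\dots,s(K)$, numbers of analyses $J_1,\dots,J_K$, sample sizes and boundaries $l_{k,j}\le u_{k,j}$ (with $l_{k,J_k}=u_{k,J_k}$). For any vector of true means $(\mu_0,\mu_1,\dots,\mu_K)$ (equivalently any $\Theta=(\theta_1,\dots,\theta_K)$ with $\theta_k=\mu_k-\mu_0$), $$P(\text{reject at least one true } H_{0k}\mid \Theta)\;\le\; P(\text{reject at least one true } H_{0k}\mid H_G),$$ where the right-hand side is computed under the global null hypothesis $H_G:\mu_0=\mu_1=\dots=\mu_K$ (under which every $H_{0k}$ is true). In particular, the family-wise error rate is maximised under the global null hypothesis.
   Context: A trial compares $K$ experimental arms with one common control arm (arm $0$). Outcomes on arm $k\in\{0,\dots,K\}$ are independent $N(\mu_k,\sigma^2)$ with $\sigma^2$ known. The control is recruited over stages $1,\dots,J_0$, with an analysis at the end of each stage; $n_{0,j}$ denotes the cumulative number of control patients by the end of stage $j$ ($n_{0,0}=0$). Experimental arm $k$ is added at the end of control stage $s(k)\ge 0$ and has analyses $j=1,\dots,J_k$ (with $s(k)+J_k\le J_0$), its $j$-th analysis coinciding with the end of control stage $s(k)+j$; $n_{k,j}$ denotes the cumulative number of patients on arm $k$ by its $j$-th analysis. Only concurrent controls are used: the test statistic for arm $k$ at its $j$-th analysis is $$Z_{k,j}=\frac{n_{k,j}^{-1}\sum_{i=1}^{n_{k,j}}X_{k,i}-(n_{0,s(k)+j}-n_{0,s(k)})^{-1}\sum_{i=n_{0,s(k)}+1}^{n_{0,s(k)+j}}X_{0,i}}{\sigma\sqrt{n_{k,j}^{-1}+(n_{0,s(k)+j}-n_{0,s(k)})^{-1}}},$$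 where $X_{k,i}$ is the outcome of the $i$-th patient on arm $k$. The null hypotheses are $H_{0k}:\mu_k\le\mu_0$, $k=1,\dots,K$. Pre-specified boundaries $l_{k,j}\le u_{k,j}$, $j=1,\dots,J_k$, with $l_{k,J_k}=u_{k,J_k}$, are used as follows: at the $j$-th analysis of an arm $k$ still in the trial, if $Z_{k,j}>u_{k,j}$ then $H_{0k}$ is rejected and the whole trial stops; if $Z_{k,j}<l_{k,j}$ arm $k$ is dropped from all subsequent stages; otherwise arm $k$ (and the control) continue to the next stage. The trial also stops if all arms have been dropped. A hypothesis not rejected by these rules is not rejected. The "probability of rejecting at least one true $H_{0k}$" is the probability, under the given means, that this procedure rejects some $H_{0k}$ with $\mu_k\le\mu_0$. *)

theory Defs
  imports "HOL-Probability.Probability"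
begin

text \<open>Arm 0 is the control; arms 1..K are experimental.
  n0 j: cumulative control patients at end of control stage j (j = 0..J0).
  s k: stage at whose end arm k is added; J k: number of analyses of arm k;
  n k j: cumulative patients on arm k at its j-th analysis;
  l k j, u k j: lower / upper boundaries.\<close>

record design =
  K  :: nat
  J0 :: nat
  n0 :: "nat \<Rightarrow> nat"
  s  :: "nat \<Rightarrow> nat"
  J  :: "nat \<Rightarrow> nat"
  n  :: "nat \<Rightarrow> nat \<Rightarrow> nat"
  l  :: "nat \<Rightarrow> nat \<Rightarrow> real"
  u  :: "nat \<Rightarrow> nat \<Rightarrow> real"

text \<open>Outcomes: omega (k, i) is the outcome of the i-th patient on arm k.\<close>

definition valid_design :: "design \<Rightarrow> bool" where
  "valid_design D \<longleftrightarrow>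
     n0 D 0 = 0 \<and>
     (\<forall>j < J0 D. n0 D j < n0 D (Suc j)) \<and>
     (\<forall>k \<in> {1..K D}. 1 \<le> J D k \<and> s D k + J D k \<le> J0 D \<and>
        (\<forall>j \<in> {1..J D k}. 0 < n D k j) \<and>
        (\<forall>j \<in> {1..<J D k}. n D k j \<le> n D k (Suc j)) \<and>
        (\<forall>j \<in> {1..J D k}. l D k j \<le> u D k j) \<and>
        l D k (J D k) = u D k (J D k))"

text \<open>Test statistic of arm k at its j-th analysis, using concurrent controls only.\<close>
definition zstat :: "design \<Rightarrow> real \<Rightarrow> nat \<Rightarrow> nat \<Rightarrow> (nat \<times> nat \<Rightarrow> real) \<Rightarrow> real" where
  "zstat D \<sigma> k j \<omega> =
     (let nk = real (n D k j);
          nc = real (n0 D (s D k + j) - n0 D (s D k))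
      in ((\<Sum>i\<in>{1..n D k j}. \<omega> (k, i)) / nk
          - (\<Sum>i\<in>{n0 D (s D k) + 1..n0 D (s D k + j)}. \<omega> (0, i)) / nc)
         / (\<sigma> * sqrt (1 / nk + 1 / nc)))"

text \<open>State of the trial after the analyses at the end of control stage t:
  (set of experimental arms still in the trial, set of hypotheses rejected).
  The trial has stopped iff the rejected set is nonempty (once stopped it is frozen).
  An arm present at the end of stage t (t \<ge> s k) has its (t - s k)-th analysis there.\<close>
primrec trial_state :: "design \<Rightarrow> real \<Rightarrow> (nat \<times> nat \<Rightarrow> real) \<Rightarrow> nat \<Rightarrow> nat set \<times> nat set" where
  "trial_state D \<sigma> \<omega> 0 = ({k \<in> {1..K D}. s D k = 0}, {})"
| "trial_state D \<sigma> \<omega> (Suc t) =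
     (let (A, R) = trial_state D \<sigma> \<omega> t in
      if R \<noteq> {} then (A, R) else
      let jj = (\<lambda>k. Suc t - s D k);
          z = (\<lambda>k. zstat D \<sigma> k (jj k) \<omega>);
          Rej = {k \<in> A. z k > u D k (jj k)};
          Drop = {k \<in> A. z k < l D k (jj k)};
          Fin = {k \<in> A. jj k = J D k}
      in ((A - Drop - Fin) \<union> {k \<in> {1..K D}. s D k = Suc t}, Rej))"

definition rejected :: "design \<Rightarrow> real \<Rightarrow> (nat \<times> nat \<Rightarrow> real) \<Rightarrow> nat set" where
  "rejected D \<sigma> \<omega> = snd (trial_state D \<sigma> \<omega> (J0 D))"

definition outcome_measure :: "nat \<Rightarrow> nat \<Rightarrow> (nat \<Rightarrow> real) \<Rightarrow> real \<Rightarrow> (nat \<times> nat \<Rightarrow> real) measure" where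
  "outcome_measure KK N \<mu> \<sigma> =
     PiM ({0..KK} \<times> {1..N}) (\<lambda>(k, i). density lborel (normal_density (\<mu> k) \<sigma>))"

definition fwer :: "design \<Rightarrow> nat \<Rightarrow> (nat \<Rightarrow> real) \<Rightarrow> real \<Rightarrow> real" where
  "fwer D N \<mu> \<sigma> =
     measure (outcome_measure (K D) N \<mu> \<sigma>)
       {\<omega> \<in> space (outcome_measure (K D) N \<mu> \<sigma>). \<exists>k \<in> rejected D \<sigma> \<omega>. \<mu> k \<le> \<mu> 0}"

end

theory Submission
  imports Defs
begin

text \<open>Couple the outcomes under the given means with those under the global null: adding to
  every outcome of arm k the difference of the two means of arm k turns the global-null law into
  the law under the given means. For an arm with a true null hypothesis this shift is at most
  the shift of the control, so its z-statistics can only decrease. Comparing the two trials stage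
  by stage, every true-null arm that is running or rejected in the shifted trial is also running
  or rejected in the unshifted one, until the latter stops. Hence whenever the shifted trial
  rejects a true null, the unshifted trial rejects some hypothesis, and under the global null
  every hypothesis is true.\<close>

lemma distr_PiM_componentwise:
  assumes M: "\<And>i. i \<in> I \<Longrightarrow> prob_space (M i)"
    and f: "\<And>i. i \<in> I \<Longrightarrow> f i \<in> M i \<rightarrow>\<^sub>M M' i"
  shows "distr (PiM I M) (PiM I M') (\<lambda>x. \<lambda>i\<in>I. f i (x i)) = PiM I (\<lambda>i. distr (M i) (M' i) (f i))"
proof (cases "I = {}")
  case True
  then have "(\<lambda>x. \<lambda>i\<in>I. f i (x i)) = (\<lambda>x. \<lambda>_. undefined)"
    by (simp add: fun_eq_iff)
  with True show ?thesis
    by (auto simp: PiM_empty emeasure_distr subset_singleton_iff intro!: measure_eqI)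
next
  case False
  interpret P: prob_space "PiM I M" by (rule prob_space_PiM) (rule M)
  have component: "distr (PiM I M) (M i) (\<lambda>x. x i) = M i" if "i \<in> I" for i
    using M that by (rule distr_PiM_component)
  have "distr (PiM I M) (PiM I M) (\<lambda>x. \<lambda>i\<in>I. x i) = PiM I M"
    by (subst distr_cong[of _ _ _ _ _ "\<lambda>x. x"]) (auto simp: space_PiM)
  also have "\<dots> = PiM I (\<lambda>i. distr (PiM I M) (M i) (\<lambda>x. x i))"
    by (intro PiM_cong) (simp_all add: component)
  finally have "P.indep_vars M (\<lambda>i x. x i) I"
    using False by (subst P.indep_vars_iff_distr_eq_PiM') auto
  then have "P.indep_vars M' (\<lambda>i x. f i (x i)) I"
    by (rule P.indep_vars_compose2) (rule f)
  then have "distr (PiM I M) (PiM I M') (\<lambda>x. \<lambda>i\<in>I. f i (x i))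
      = PiM I (\<lambda>i. distr (PiM I M) (M' i) (\<lambda>x. f i (x i)))"
    using False f by (subst (asm) P.indep_vars_iff_distr_eq_PiM') auto
  also have "\<dots> = PiM I (\<lambda>i. distr (M i) (M' i) (f i))"
  proof (intro PiM_cong refl)
    fix i assume "i \<in> I"
    then have "distr (PiM I M) (M' i) (\<lambda>x. f i (x i)) = distr (distr (PiM I M) (M i) (\<lambda>x. x i)) (M' i) (f i)"
      using f by (subst distr_distr) (auto simp: comp_def)
    with \<open>i \<in> I\<close> show "distr (PiM I M) (M' i) (\<lambda>x. f i (x i)) = distr (M i) (M' i) (f i)"
      by (simp add: component)
  qed
  finally show ?thesis .
qed

lemma distr_normal_density_shift:
  assumes "0 < \<sigma>" and "sets N = sets borel"
  shows "distr (density lborel (normal_density m \<sigma>)) N (\<lambda>x. x + c) = density lborel (normal_density (m + c) \<sigma>)"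
proof -
  interpret prob_space "density lborel (normal_density m \<sigma>)"
    using assms(1) by (rule prob_space_normal_density)
  have "distributed (density lborel (normal_density m \<sigma>)) lborel (\<lambda>x. x) (normal_density m \<sigma>)"
    by (simp add: distributed_def distr_id2)
  then have "distributed (density lborel (normal_density m \<sigma>)) lborel (\<lambda>x. c + 1 * x) (normal_density (c + 1 * m) (\<bar>1\<bar> * \<sigma>))"
    using assms(1) by (rule normal_density_affine) simp
  moreover have "distr (density lborel (normal_density m \<sigma>)) N (\<lambda>x. x + c)
      = distr (density lborel (normal_density m \<sigma>)) lborel (\<lambda>x. c + 1 * x)"
    using assms(2) by (intro distr_cong) auto
  ultimately show ?thesis
    by (simp add: distributed_def add.commute)
qed

lemma valid_design_n0_less:
  assumes "valid_design D" "a < b" "b \<le> J0 D"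
  shows "n0 D a < n0 D b"
  using assms(2,3)
  by (induction a b rule: less_Suc_induct) (use assms(1) in \<open>auto simp: valid_design_def\<close>)

lemma trial_state_stopped:
  "snd (trial_state D \<sigma> \<omega> t) \<noteq> {} \<Longrightarrow> trial_state D \<sigma> \<omega> (Suc t) = trial_state D \<sigma> \<omega> t"
  by (cases "trial_state D \<sigma> \<omega> t") (auto simp: Let_def)

lemma trial_state_Suc_active_iff:
  assumes "snd (trial_state D \<sigma> \<omega> t) = {}"
  shows "k \<in> fst (trial_state D \<sigma> \<omega> (Suc t)) \<longleftrightarrow>
    k \<in> fst (trial_state D \<sigma> \<omega> t) \<and> \<not> zstat D \<sigma> k (Suc t - s D k) \<omega> < l D k (Suc t - s D k)
      \<and> Suc t - s D k \<noteq> J D k \<or> k \<in> {1..K D} \<and> s D k = Suc t"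
  using assms by (cases "trial_state D \<sigma> \<omega> t") (auto simp: Let_def)

lemma trial_state_Suc_rejected_iff:
  assumes "snd (trial_state D \<sigma> \<omega> t) = {}"
  shows "k \<in> snd (trial_state D \<sigma> \<omega> (Suc t)) \<longleftrightarrow>
    k \<in> fst (trial_state D \<sigma> \<omega> t) \<and> u D k (Suc t - s D k) < zstat D \<sigma> k (Suc t - s D k) \<omega>"
  using assms by (cases "trial_state D \<sigma> \<omega> t") (auto simp: Let_def)

lemma trial_state_subset:
  "fst (trial_state D \<sigma> \<omega> t) \<subseteq> {1..K D} \<and> snd (trial_state D \<sigma> \<omega> t) \<subseteq> {1..K D}"
proof (induction t)
  case (Suc t)
  show ?case
  proof (cases "snd (trial_state D \<sigma> \<omega> t) = {}")
    case True
    with Suc show ?thesis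
      unfolding subset_iff trial_state_Suc_active_iff[OF True] trial_state_Suc_rejected_iff[OF True]
      by auto
  next
    case False
    with Suc show ?thesis by (metis trial_state_stopped)
  qed
qed auto

lemma trial_state_active_analysis:
  assumes "valid_design D" "snd (trial_state D \<sigma> \<omega> t) = {}" "k \<in> fst (trial_state D \<sigma> \<omega> t)"
  shows "k \<in> {1..K D} \<and> s D k \<le> t \<and> Suc t - s D k \<le> J D k"
  using assms(2,3)
proof (induction t arbitrary: k)
  case 0
  then show ?case using assms(1) by (auto simp: valid_design_def)
next
  case (Suc t)
  have running: "snd (trial_state D \<sigma> \<omega> t) = {}"
    using Suc.prems(1) trial_state_stopped by metis
  from Suc.prems(2) consider
      "k \<in> fst (trial_state D \<sigma> \<omega> t)" "Suc t - s D k \<noteq> J D k"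
    | "k \<in> {1..K D}" "s D k = Suc t"
    unfolding trial_state_Suc_active_iff[OF running] by blast
  then show ?case
  proof cases
    case 1
    then show ?thesis using Suc.IH[OF running] by fastforce
  next
    case 2
    then show ?thesis using assms(1) by (auto simp: valid_design_def)
  qed
qed

lemma trial_state_Suc_mono:
  assumes running: "snd (trial_state D \<sigma> \<omega> t) = {}" "snd (trial_state D \<sigma> \<omega>' t) = {}"
    and active: "k \<in> fst (trial_state D \<sigma> \<omega>' t) \<Longrightarrow> k \<in> fst (trial_state D \<sigma> \<omega> t)"
    and smaller: "k \<in> fst (trial_state D \<sigma> \<omega>' t) \<Longrightarrow>
      zstat D \<sigma> k (Suc t - s D k) \<omega>' \<le> zstat D \<sigma> k (Suc t - s D k) \<omega>"
  shows "(k \<in> fst (trial_state D \<sigma> \<omega>' (Suc t)) \<longrightarrow> k \<in> fst (trial_state D \<sigma> \<omega> (Suc t))) \<and>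
    (k \<in> snd (trial_state D \<sigma> \<omega>' (Suc t)) \<longrightarrow> k \<in> snd (trial_state D \<sigma> \<omega> (Suc t)))"
  using active smaller
  unfolding trial_state_Suc_active_iff[OF running(1)] trial_state_Suc_active_iff[OF running(2)]
    trial_state_Suc_rejected_iff[OF running(1)] trial_state_Suc_rejected_iff[OF running(2)]
  by force

text \<open>Once the trial under \<open>\<omega>'\<close> has stopped, its state is frozen while the trial under
  \<open>\<omega>\<close> may still drop arms; so from then on only the rejection part of the invariant survives.\<close>

lemma trial_state_dominated:
  assumes "valid_design D"
    and dominated: "\<And>k j. k \<in> T \<Longrightarrow> k \<in> {1..K D} \<Longrightarrow> j \<in> {1..J D k} \<Longrightarrow>
      zstat D \<sigma> k j \<omega>' \<le> zstat D \<sigma> k j \<omega>"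
    and "snd (trial_state D \<sigma> \<omega> t) = {}"
  shows "snd (trial_state D \<sigma> \<omega>' t) \<inter> T = {} \<and>
    (snd (trial_state D \<sigma> \<omega>' t) = {} \<longrightarrow> fst (trial_state D \<sigma> \<omega>' t) \<inter> T \<subseteq> fst (trial_state D \<sigma> \<omega> t))"
  using assms(3)
proof (induction t)
  case (Suc t)
  have running: "snd (trial_state D \<sigma> \<omega> t) = {}"
    using Suc.prems trial_state_stopped by metis
  note IH = Suc.IH[OF running]
  show ?case
  proof (cases "snd (trial_state D \<sigma> \<omega>' t) = {}")
    case running': True
    have "(k \<in> fst (trial_state D \<sigma> \<omega>' (Suc t)) \<longrightarrow> k \<in> fst (trial_state D \<sigma> \<omega> (Suc t))) \<and>
      (k \<in> snd (trial_state D \<sigma> \<omega>' (Suc t)) \<longrightarrow> k \<in> snd (trial_state D \<sigma> \<omega> (Suc t)))"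
      if "k \<in> T" for k
    proof (rule trial_state_Suc_mono[OF running running'])
      assume "k \<in> fst (trial_state D \<sigma> \<omega>' t)"
      then show active: "k \<in> fst (trial_state D \<sigma> \<omega> t)"
        using IH running' \<open>k \<in> T\<close> by blast
      show "zstat D \<sigma> k (Suc t - s D k) \<omega>' \<le> zstat D \<sigma> k (Suc t - s D k) \<omega>"
        using trial_state_active_analysis[OF assms(1) running active] \<open>k \<in> T\<close>
        by (intro dominated) auto
    qed
    with Suc.prems show ?thesis by blast
  next
    case False
    with IH show ?thesis by (metis trial_state_stopped)
  qed
qed simp

lemma rejected_nonempty_if_dominated:
  assumes "valid_design D"
    and "\<And>k j. k \<in> T \<Longrightarrow> k \<in> {1..K D} \<Longrightarrow> j \<in> {1..J D k} \<Longrightarrow>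
      zstat D \<sigma> k j \<omega>' \<le> zstat D \<sigma> k j \<omega>"
    and "rejected D \<sigma> \<omega>' \<inter> T \<noteq> {}"
  shows "rejected D \<sigma> \<omega> \<noteq> {}"
  using trial_state_dominated[OF assms(1,2)] assms(3) unfolding rejected_def by blast

lemma zstat_shift:
  assumes "0 < n D k j" "n0 D (s D k) < n0 D (s D k + j)"
    and "k \<le> KK" "n D k j \<le> N" "n0 D (s D k + j) \<le> N"
  shows "zstat D \<sigma> k j (\<lambda>x\<in>{0..KK} \<times> {1..N}. \<omega> x + c (fst x)) = zstat D \<sigma> k j \<omega> +
    (c k - c 0) / (\<sigma> * sqrt (1 / real (n D k j) + 1 / real (n0 D (s D k + j) - n0 D (s D k))))"
proof -
  define a b m where "a = n0 D (s D k)" and "b = n0 D (s D k + j)" and "m = n D k j"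
  have arm: "(\<Sum>i\<in>{1..m}. (\<lambda>x\<in>{0..KK} \<times> {1..N}. \<omega> x + c (fst x)) (k, i))
      = (\<Sum>i\<in>{1..m}. \<omega> (k, i)) + real m * c k"
    using assms(3,4) by (simp add: m_def sum.distrib)
  have control: "(\<Sum>i\<in>{a + 1..b}. (\<lambda>x\<in>{0..KK} \<times> {1..N}. \<omega> x + c (fst x)) (0, i))
      = (\<Sum>i\<in>{a + 1..b}. \<omega> (0, i)) + real (b - a) * c 0"
  proof -
    have "(\<Sum>i\<in>{a + 1..b}. (\<lambda>x\<in>{0..KK} \<times> {1..N}. \<omega> x + c (fst x)) (0, i))
        = (\<Sum>i\<in>{a + 1..b}. \<omega> (0, i) + c 0)"
      using assms(5) by (intro sum.cong) (auto simp: b_def)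
    then show ?thesis by (simp add: sum.distrib)
  qed
  define X Y d where "X = (\<Sum>i\<in>{1..m}. \<omega> (k, i))" and "Y = (\<Sum>i\<in>{a + 1..b}. \<omega> (0, i))"
    and "d = real (b - a)"
  have "real m > 0" "d > 0" using assms(1,2) by (auto simp: a_def b_def m_def d_def)
  then have shifted: "(X + real m * c k) / real m - (Y + d * c 0) / d = (X / real m - Y / d) + (c k - c 0)"
    by (simp add: field_simps)
  show ?thesis
    unfolding zstat_def Let_def a_def[symmetric] b_def[symmetric] m_def[symmetric] arm control
    unfolding X_def[symmetric] Y_def[symmetric] d_def[symmetric] shifted
    by (rule add_divide_distrib)
qed

lemma zstat_shift_le:
  assumes "valid_design D" "0 < \<sigma>" "n0 D (J0 D) \<le> N"
    and "k \<in> {1..K D}" "j \<in> {1..J D k}" "n D k j \<le> N" "c k \<le> c 0"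
  shows "zstat D \<sigma> k j (\<lambda>x\<in>{0..K D} \<times> {1..N}. \<omega> x + c (fst x)) \<le> zstat D \<sigma> k j \<omega>"
proof -
  have "s D k + J D k \<le> J0 D" "0 < n D k j"
    using assms(1,4,5) unfolding valid_design_def by blast+
  then have control: "n0 D (s D k) < n0 D (s D k + j)" "n0 D (s D k + j) \<le> n0 D (J0 D)"
    using valid_design_n0_less[OF assms(1)] assms(5) by (auto simp: le_less)
  have "(c k - c 0) / (\<sigma> * sqrt (1 / real (n D k j) + 1 / real (n0 D (s D k + j) - n0 D (s D k)))) \<le> 0"
    using assms(2,7) by (intro divide_nonpos_nonneg) auto
  with zstat_shift[OF \<open>0 < n D k j\<close> control(1)] assms(3,4,6) control(2) show ?thesis
    by fastforce
qed

lemma shifted_rejection_implies_null_rejection: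
  assumes "valid_design D" "0 < \<sigma>" "n0 D (J0 D) \<le> N"
    and "\<forall>k \<in> {1..K D}. \<forall>j \<in> {1..J D k}. n D k j \<le> N"
    and "\<forall>k \<in> {1..K D}. \<mu>G k = \<mu>G 0"
    and "k \<in> rejected D \<sigma> (\<lambda>x\<in>{0..K D} \<times> {1..N}. \<omega> x + (\<mu> (fst x) - \<mu>G (fst x)))" "\<mu> k \<le> \<mu> 0"
  shows "\<exists>k \<in> rejected D \<sigma> \<omega>. \<mu>G k \<le> \<mu>G 0"
proof -
  have "zstat D \<sigma> k j (\<lambda>x\<in>{0..K D} \<times> {1..N}. \<omega> x + (\<mu> (fst x) - \<mu>G (fst x))) \<le> zstat D \<sigma> k j \<omega>"
    if "k \<in> {k. \<mu> k \<le> \<mu> 0}" "k \<in> {1..K D}" "j \<in> {1..J D k}" for k j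
    using that assms(4,5) by (intro zstat_shift_le[OF assms(1-3)]) auto
  with assms(6,7) obtain k' where "k' \<in> rejected D \<sigma> \<omega>"
    using rejected_nonempty_if_dominated[OF assms(1)] by blast
  moreover have "\<mu>G k' = \<mu>G 0" if "k' \<in> rejected D \<sigma> \<omega>" for k'
    using that trial_state_subset[of D \<sigma> \<omega> "J0 D"] assms(5) unfolding rejected_def by auto
  ultimately show ?thesis by force
qed

text \<open>\<open>zstat\<close> may read coordinates outside the index set, where every point of the
  product space has the junk value \<open>undefined\<close>.\<close>

lemma measurable_component_PiM_borel [measurable]:
  "(\<lambda>\<omega>. \<omega> x) \<in> borel_measurable (PiM I (\<lambda>_. borel :: real measure))"
proof (cases "x \<in> I")
  case True
  then show ?thesis by (rule measurable_component_singleton)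
next
  case False
  then have "\<omega> x = undefined" if "\<omega> \<in> space (PiM I (\<lambda>_. borel :: real measure))" for \<omega>
    using that by (auto simp: space_PiM PiE_def extensional_def)
  then show ?thesis
    by (subst measurable_cong[where g = "\<lambda>_. undefined"]) auto
qed

lemma zstat_measurable [measurable]:
  "zstat D \<sigma> k j \<in> borel_measurable (PiM I (\<lambda>_. borel :: real measure))"
  unfolding zstat_def Let_def by measurable

lemma trial_state_measurable:
  "Measurable.pred (PiM I (\<lambda>_. borel :: real measure)) (\<lambda>\<omega>. k \<in> fst (trial_state D \<sigma> \<omega> t)) \<and>
   Measurable.pred (PiM I (\<lambda>_. borel :: real measure)) (\<lambda>\<omega>. k \<in> snd (trial_state D \<sigma> \<omega> t))"
proof (induction t arbitrary: k)
  case (Suc t)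
  have [measurable]:
    "Measurable.pred (PiM I (\<lambda>_. borel :: real measure)) (\<lambda>\<omega>. k \<in> fst (trial_state D \<sigma> \<omega> t))"
    "Measurable.pred (PiM I (\<lambda>_. borel :: real measure)) (\<lambda>\<omega>. k \<in> snd (trial_state D \<sigma> \<omega> t))" for k
    using Suc by auto
  \<comment> \<open>stopping is expressed as a countable existential, which the measurability prover handles\<close>
  have stopped: "snd (trial_state D \<sigma> \<omega> t) \<noteq> {} \<longleftrightarrow> (\<exists>k. k \<in> snd (trial_state D \<sigma> \<omega> t))" for \<omega>
    by auto
  have "(k \<in> fst (trial_state D \<sigma> \<omega> (Suc t))) \<longleftrightarrow>
      (if \<exists>k. k \<in> snd (trial_state D \<sigma> \<omega> t) then k \<in> fst (trial_state D \<sigma> \<omega> t)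
       else k \<in> fst (trial_state D \<sigma> \<omega> t) \<and> \<not> zstat D \<sigma> k (Suc t - s D k) \<omega> < l D k (Suc t - s D k)
         \<and> Suc t - s D k \<noteq> J D k \<or> k \<in> {1..K D} \<and> s D k = Suc t)"
    "(k \<in> snd (trial_state D \<sigma> \<omega> (Suc t))) \<longleftrightarrow>
      (if \<exists>k. k \<in> snd (trial_state D \<sigma> \<omega> t) then k \<in> snd (trial_state D \<sigma> \<omega> t)
       else k \<in> fst (trial_state D \<sigma> \<omega> t) \<and> u D k (Suc t - s D k) < zstat D \<sigma> k (Suc t - s D k) \<omega>)"
    for \<omega>
    unfolding stopped[symmetric]
    by (auto simp del: trial_state.simps
        simp: trial_state_stopped trial_state_Suc_active_iff trial_state_Suc_rejected_iff)
  then show ?case by simp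
qed simp

lemma sets_outcome_measure:
  "sets (outcome_measure KK N \<mu> \<sigma>) = sets (PiM ({0..KK} \<times> {1..N}) (\<lambda>_. borel :: real measure))"
  unfolding outcome_measure_def by (intro sets_PiM_cong) auto

lemma prob_space_outcome_measure: "0 < \<sigma> \<Longrightarrow> prob_space (outcome_measure KK N \<mu> \<sigma>)"
  unfolding outcome_measure_def by (auto intro!: prob_space_PiM prob_space_normal_density)

lemma sets_rejection_event:
  "{\<omega> \<in> space (outcome_measure KK N \<mu> \<sigma>). \<exists>k \<in> rejected D \<sigma>' \<omega>. P k} \<in> sets (outcome_measure KK N \<mu> \<sigma>)"
proof -
  have "Measurable.pred (PiM ({0..KK} \<times> {1..N}) (\<lambda>_. borel :: real measure))
      (\<lambda>\<omega>. \<exists>k \<in> {k. P k}. k \<in> snd (trial_state D \<sigma>' \<omega> (J0 D)))"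
    by (intro pred_intros_countable_bounded(4) trial_state_measurable[THEN conjunct2])
  then have "Measurable.pred (outcome_measure KK N \<mu> \<sigma>) (\<lambda>\<omega>. \<exists>k \<in> rejected D \<sigma>' \<omega>. P k)"
    by (simp add: measurable_cong_sets[OF sets_outcome_measure refl] rejected_def Bex_def conj_commute)
  then show ?thesis
    by (simp add: Measurable.pred_def)
qed

lemma distr_outcome_measure_shift:
  assumes "0 < \<sigma>"
  shows "distr (outcome_measure KK N \<mu>' \<sigma>) (outcome_measure KK N \<mu> \<sigma>)
      (\<lambda>\<omega>. \<lambda>x\<in>{0..KK} \<times> {1..N}. \<omega> x + (\<mu> (fst x) - \<mu>' (fst x))) = outcome_measure KK N \<mu> \<sigma>"
proof -
  define M M' where "M = (\<lambda>(k, i::nat). density lborel (normal_density (\<mu>' k) \<sigma>))"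
    and "M' = (\<lambda>(k, i::nat). density lborel (normal_density (\<mu> k) \<sigma>))"
  define f :: "nat \<times> nat \<Rightarrow> real \<Rightarrow> real" where "f = (\<lambda>x y. y + (\<mu> (fst x) - \<mu>' (fst x)))"
  have "distr (M x) (M' x) (f x) = M' x" for x
    using distr_normal_density_shift[OF assms, of "M' x" "\<mu>' (fst x)"]
    by (cases x) (simp add: M_def M'_def f_def)
  moreover have "distr (PiM ({0..KK} \<times> {1..N}) M) (PiM ({0..KK} \<times> {1..N}) M')
      (\<lambda>\<omega>. \<lambda>x\<in>{0..KK} \<times> {1..N}. f x (\<omega> x)) = PiM ({0..KK} \<times> {1..N}) (\<lambda>x. distr (M x) (M' x) (f x))"
  proof (rule distr_PiM_componentwise)
    fix x :: "nat \<times> nat"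
    show "prob_space (M x)"
      using assms by (cases x) (simp add: M_def prob_space_normal_density)
    show "f x \<in> M x \<rightarrow>\<^sub>M M' x"
      by (cases x) (simp add: M_def M'_def f_def)
  qed
  ultimately show ?thesis
    by (simp add: outcome_measure_def M_def[symmetric] M'_def[symmetric] f_def)
qed

theorem theorem1:
  fixes D :: design and N :: nat and \<sigma> :: real and \<mu> \<mu>G :: "nat \<Rightarrow> real"
  assumes "valid_design D"
    and "0 < \<sigma>"
    and "n0 D (J0 D) \<le> N"
    and "\<forall>k \<in> {1..K D}. \<forall>j \<in> {1..J D k}. n D k j \<le> N"
    and "\<forall>k \<in> {1..K D}. \<mu>G k = \<mu>G 0"
  shows "fwer D N \<mu> \<sigma> \<le> fwer D N \<mu>G \<sigma>"
proof -
  let ?P = "outcome_measure (K D) N \<mu> \<sigma>" and ?PG = "outcome_measure (K D) N \<mu>G \<sigma>"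
  define shift where "shift = (\<lambda>\<omega>. \<lambda>x\<in>{0..K D} \<times> {1..N}. \<omega> x + (\<mu> (fst x) - \<mu>G (fst x)))"
  define E EG where "E = {\<omega> \<in> space ?P. \<exists>k \<in> rejected D \<sigma> \<omega>. \<mu> k \<le> \<mu> 0}"
    and "EG = {\<omega> \<in> space ?PG. \<exists>k \<in> rejected D \<sigma> \<omega>. \<mu>G k \<le> \<mu>G 0}"
  interpret PG: prob_space ?PG using assms(2) by (rule prob_space_outcome_measure)
  have shift_measurable: "shift \<in> ?PG \<rightarrow>\<^sub>M ?P"
    unfolding shift_def measurable_cong_sets[OF sets_outcome_measure sets_outcome_measure]
    by (rule measurable_restrict) measurable
  have "shift -` E \<inter> space ?PG \<subseteq> EG"
    using shifted_rejection_implies_null_rejection[OF assms] by (auto simp: E_def EG_def shift_def)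
  then have "measure ?PG (shift -` E \<inter> space ?PG) \<le> measure ?PG EG"
    using sets_rejection_event unfolding EG_def by (rule PG.finite_measure_mono)
  also have "measure ?PG (shift -` E \<inter> space ?PG) = measure (distr ?PG ?P shift) E"
    by (rule measure_distr[symmetric, OF shift_measurable]) (unfold E_def, rule sets_rejection_event)
  also have "distr ?PG ?P shift = ?P"
    unfolding shift_def using assms(2) by (rule distr_outcome_measure_shift)
  finally show ?thesis
    by (simp add: fwer_def E_def EG_def)
qed

end
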